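(* Let $V$ be a reflexive Banach space, $F: V\to\mathbb{R}$ Fréchet differentiable and convex, $G\in\Gamma_0(V)$. For $1\le k\le N$ let $V_k$ be reflexive Banach spaces and $R_k^*: V_k\to V$ bounded linear operators with $V=\sum_{k=1}^N R_k^*V_k$ and surjective adjoints $R_k: V^*\to V_k^*$, and let $d_k, G_k: V_k\times V\to\overline{\mathbb{R}}$ be proper, convex and lower semicontinuous in their first argument. Let $\tau_0\in(0,1]$ and $\omega_0>0$ be given constants, $\tau\in(0,\tau_0]$, $\omega\ge\omega_0$, and $u^{(0)}\in\operatorname{dom}G$. Let $\{u^{(n)}\}$ be generated by the additive Schwarz method: for $n\ge0$, $$w_k^{(n+1)} \in \operatorname{argmin}_{w_k\in V_k}\big\{F(u^{(n)}) + \langle F'(u^{(n)}), R_k^* w_k\rangle + \omega d_k(w_k,u^{(n)}) + G_k(w_k,u^{(n)})\big\},\ 1\le k\le N,$$ $$u^{(n+1)} = u^{(n)} + \tau\sum_{k=1}^N R_k^* w_k^{(n+1)}.$$ Then for all $n\ge0$, $$u^{(n+1)} \in \operatorname{argmin}_{u\in V}\big\{F(u^{(n)}) + \langle F'(u^{(n)}), u-u^{(n)}\rangle + M_{\tau,\omega}(u,u^{(n)})\big\},$$ where $M_{\tau,\omega}(u,v) = \tau\inf\{\sum_{k=1}^N(\omega d_k+G_k)(w_k,v) : u-v = \tau\sum_{k=1}^N R_k^*w_k,\ w_k\in V_k\} + (1-\tau N)G(v)$.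
   Context: $\Gamma_0(V)$ is the set of proper, convex, lower semicontinuous functionals $V\to\mathbb{R}\cup\{+\infty\}$; $\operatorname{dom} G=\{u: G(u)<\infty\}$; $\overline{\mathbb{R}} = \mathbb{R}\cup\{\pm\infty\}$. *)

theory Defs
  imports "HOL-Analysis.Analysis"
begin

definition reflexive_space :: "'a::real_normed_vector itself \<Rightarrow> bool" where
  "reflexive_space TYPE('a) \<longleftrightarrow>
     (\<forall>\<phi> :: ('a \<Rightarrow>\<^sub>L real) \<Rightarrow>\<^sub>L real. \<exists>x::'a. \<forall>f. blinfun_apply \<phi> f = blinfun_apply f x)"

definition bounded_linear_on :: "'a::real_normed_vector set \<Rightarrow> ('a \<Rightarrow> 'b::real_normed_vector) \<Rightarrow> bool" where
  "bounded_linear_on S f \<longleftrightarrow>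
     (\<forall>x\<in>S. \<forall>y\<in>S. f (x + y) = f x + f y) \<and>
     (\<forall>x\<in>S. \<forall>c. f (c *\<^sub>R x) = c *\<^sub>R f x) \<and>
     (\<exists>C. \<forall>x\<in>S. norm (f x) \<le> C * norm x)"

definition proper_on :: "'a set \<Rightarrow> ('a \<Rightarrow> ereal) \<Rightarrow> bool" where
  "proper_on S f \<longleftrightarrow> (\<forall>x\<in>S. f x \<noteq> -\<infinity>) \<and> (\<exists>x\<in>S. f x < \<infinity>)"

definition ereal_convex_on :: "'a::real_vector set \<Rightarrow> ('a \<Rightarrow> ereal) \<Rightarrow> bool" where
  "ereal_convex_on S f \<longleftrightarrow> convex S \<and>
     (\<forall>x\<in>S. \<forall>y\<in>S. \<forall>t::real. 0 \<le> t \<and> t \<le> 1 \<longrightarrow>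
        f ((1 - t) *\<^sub>R x + t *\<^sub>R y) \<le> ereal (1 - t) * f x + ereal t * f y)"

definition lsc_on :: "'a::topological_space set \<Rightarrow> ('a \<Rightarrow> ereal) \<Rightarrow> bool" where
  "lsc_on S f \<longleftrightarrow> (\<forall>c::real. closedin (top_of_set S) {x\<in>S. f x \<le> ereal c})"

definition Gamma0_on :: "'a::real_normed_vector set \<Rightarrow> ('a \<Rightarrow> ereal) \<Rightarrow> bool" where
  "Gamma0_on S f \<longleftrightarrow> proper_on S f \<and> ereal_convex_on S f \<and> lsc_on S f"

definition M_fun ::
  "nat \<Rightarrow> (nat \<Rightarrow> 'w::real_normed_vector set) \<Rightarrow> (nat \<Rightarrow> 'w \<Rightarrow> 'v::real_normed_vector)
   \<Rightarrow> (nat \<Rightarrow> 'w \<Rightarrow> 'v \<Rightarrow> ereal) \<Rightarrow> (nat \<Rightarrow> 'w \<Rightarrow> 'v \<Rightarrow> ereal) \<Rightarrow> ('v \<Rightarrow> ereal)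
   \<Rightarrow> real \<Rightarrow> real \<Rightarrow> 'v \<Rightarrow> 'v \<Rightarrow> ereal" where
  "M_fun N S Rs d Gk G \<tau> \<omega> u v =
     ereal \<tau> * (INF w \<in> {w. (\<forall>k\<in>{1..N}. w k \<in> S k) \<and> u - v = \<tau> *\<^sub>R (\<Sum>k=1..N. Rs k (w k))}.
                  (\<Sum>k=1..N. ereal \<omega> * d k (w k) v + Gk k (w k) v))
     + ereal (1 - \<tau> * real N) * G v"

end

theory Submission
  imports Defs
begin

text \<open>On the fibre of \<open>u\<close>, i.e. for \<open>u - v = \<tau> \<Sum>\<^sub>k R\<^sub>k\<^sup>* w\<^sub>k\<close>, linearity of \<open>F'(v)\<close> gives
  \<open>\<langle>F'(v), u - v\<rangle> = \<tau> \<Sum>\<^sub>k \<langle>F'(v), R\<^sub>k\<^sup>* w\<^sub>k\<rangle>\<close>. Minimised jointly over \<open>u\<close> and its fibre, the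
  linearised objective is therefore \<open>\<tau>\<close> times a sum of decoupled local objectives in the
  \<open>w\<^sub>k \<in> V\<^sub>k\<close>. The local minimisers of step \<open>n + 1\<close> minimise every summand, and the new
  iterate is precisely the point whose fibre contains them.\<close>

lemma ereal_cmult_INF:
  assumes "0 < c"
  shows "ereal c * (INF a\<in>A. g a) = (INF a\<in>A. ereal c * g a)"
proof -
  have "{ereal c * x |x. x \<in> g ` A} = (\<lambda>a. ereal c * g a) ` A" by auto
  with ereal_Inf_cmult[OF assms, of "\<lambda>x. x \<in> g ` A"] show ?thesis by simp
qed

lemma ereal_cmult_sum_plus:
  fixes a :: "'i \<Rightarrow> real" and b :: "'i \<Rightarrow> ereal"
  shows "ereal (t * (\<Sum>k\<in>K. a k)) + ereal t * (\<Sum>k\<in>K. b k) = ereal t * (\<Sum>k\<in>K. ereal (a k) + b k)"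
proof -
  have "(\<Sum>k\<in>K. ereal (a k) + b k) = ereal (\<Sum>k\<in>K. a k) + (\<Sum>k\<in>K. b k)"
    by (simp add: sum.distrib)
  also have "ereal t * \<dots> = ereal t * ereal (\<Sum>k\<in>K. a k) + ereal t * (\<Sum>k\<in>K. b k)"
    by (rule ereal_distrib_left) auto
  finally show ?thesis by simp
qed

lemma plus_cmult_INF_minimal:
  fixes l :: "'y \<Rightarrow> real" and f h :: "'a \<Rightarrow> ereal"
  assumes c: "0 < c"
    and split: "\<And>y a. a \<in> A y \<Longrightarrow> ereal (l y) + ereal c * f a = ereal c * h a"
    and a0: "a0 \<in> A y0"
    and min: "\<And>y a. a \<in> A y \<Longrightarrow> h a0 \<le> h a"
  shows "ereal (l y0) + ereal c * (INF a\<in>A y0. f a) \<le> ereal (l y) + ereal c * (INF a\<in>A y. f a)"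
    (is "?P \<le> _")
proof -
  have "?P \<le> ereal (l y) + ereal c * f a" if "a \<in> A y" for a
  proof -
    have "?P \<le> ereal (l y0) + ereal c * f a0"
      using c a0 by (intro add_left_mono ereal_mult_left_mono INF_lower) auto
    also have "\<dots> = ereal c * h a0" using split[OF a0] .
    also have "\<dots> \<le> ereal c * h a" using c min[OF that] by (intro ereal_mult_left_mono) auto
    also have "\<dots> = ereal (l y) + ereal c * f a" using split[OF that] by simp
    finally show ?thesis .
  qed
  then have "?P - ereal (l y) \<le> ereal c * (INF a\<in>A y. f a)"
    unfolding ereal_cmult_INF[OF c] by (intro INF_greatest) (simp add: ereal_minus_le add.commute)
  then show ?thesis by (simp add: ereal_minus_le add.commute)
qed

lemma M_fun_linearised_minimal:
  fixes L :: "'v::real_normed_vector \<Rightarrow> real" and Rs :: "nat \<Rightarrow> 'w::real_normed_vector \<Rightarrow> 'v"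
  assumes "linear L" "0 < \<tau>"
    and w0: "\<forall>k\<in>{1..N}. w0 k \<in> S k" "u0 - v = \<tau> *\<^sub>R (\<Sum>k=1..N. Rs k (w0 k))"
    and local_min: "\<And>k z. k \<in> {1..N} \<Longrightarrow> z \<in> S k \<Longrightarrow>
        ereal (L (Rs k (w0 k))) + ereal \<omega> * d k (w0 k) v + Gk k (w0 k) v
        \<le> ereal (L (Rs k z)) + ereal \<omega> * d k z v + Gk k z v"
  shows "ereal (c + L (u0 - v)) + M_fun N S Rs d Gk G \<tau> \<omega> u0 v
       \<le> ereal (c + L (u - v)) + M_fun N S Rs d Gk G \<tau> \<omega> u v"
proof -
  define A where "A y = {w. (\<forall>k\<in>{1..N}. w k \<in> S k) \<and> y - v = \<tau> *\<^sub>R (\<Sum>k=1..N. Rs k (w k))}" for y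
  define f where "f w = (\<Sum>k=1..N. ereal \<omega> * d k (w k) v + Gk k (w k) v)" for w
  define h where "h w = (\<Sum>k=1..N. ereal (L (Rs k (w k))) + ereal \<omega> * d k (w k) v + Gk k (w k) v)" for w
  have split: "ereal (L (y - v)) + ereal \<tau> * f w = ereal \<tau> * h w" if "w \<in> A y" for y w
  proof -
    have "L (y - v) = \<tau> * (\<Sum>k=1..N. L (Rs k (w k)))"
      using that \<open>linear L\<close> by (simp add: A_def linear_scale linear_sum)
    then show ?thesis
      using ereal_cmult_sum_plus[of \<tau> "\<lambda>k. L (Rs k (w k))" "{1..N}"] by (simp add: f_def h_def add.assoc)
  qed
  have min: "h w0 \<le> h w" if "w \<in> A y" for y w
    unfolding h_def using that local_min by (intro sum_mono) (auto simp: A_def)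
  have "w0 \<in> A u0" using w0 by (simp add: A_def)
  from plus_cmult_INF_minimal[where A = A and l = "\<lambda>y. L (y - v)" and f = f and h = h, OF \<open>0 < \<tau>\<close> split this min]
  have "ereal (L (u0 - v)) + ereal \<tau> * (INF w\<in>A u0. f w)
      \<le> ereal (L (u - v)) + ereal \<tau> * (INF w\<in>A u. f w)" .
  then have "ereal c + (ereal (L (u0 - v)) + ereal \<tau> * (INF w\<in>A u0. f w) + ereal (1 - \<tau> * N) * G v)
      \<le> ereal c + (ereal (L (u - v)) + ereal \<tau> * (INF w\<in>A u. f w) + ereal (1 - \<tau> * N) * G v)"
    by (intro add_left_mono add_right_mono)
  then show ?thesis
    unfolding M_fun_def A_def f_def by (simp only: plus_ereal.simps(1)[symmetric] add.assoc)
qed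

theorem lemma4p5:
  fixes F :: "'v::banach \<Rightarrow> real"
    and F' :: "'v \<Rightarrow> ('v \<Rightarrow>\<^sub>L real)"
    and G :: "'v \<Rightarrow> ereal"
    and N :: nat
    and S :: "nat \<Rightarrow> 'w::banach set"
    and Rs :: "nat \<Rightarrow> 'w \<Rightarrow> 'v"
    and d Gk :: "nat \<Rightarrow> 'w \<Rightarrow> 'v \<Rightarrow> ereal"
    and \<tau>0 \<omega>0 \<tau> \<omega> :: real
    and u :: "nat \<Rightarrow> 'v"
    and w :: "nat \<Rightarrow> nat \<Rightarrow> 'w"
  assumes reflV: "reflexive_space TYPE('v)"
    and Fdiff: "\<And>x. (F has_derivative blinfun_apply (F' x)) (at x)"
    and Fconv: "convex_on UNIV F"
    and G0: "Gamma0_on UNIV G"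
    and N1: "N \<ge> 1"
    and reflW: "reflexive_space TYPE('w)"
    and Ssub: "\<And>k. k \<in> {1..N} \<Longrightarrow> subspace (S k) \<and> closed (S k)"
    and Rbl: "\<And>k. k \<in> {1..N} \<Longrightarrow> bounded_linear_on (S k) (Rs k)"
    and Rsum: "\<And>v. \<exists>z. (\<forall>k\<in>{1..N}. z k \<in> S k) \<and> v = (\<Sum>k=1..N. Rs k (z k))"
    and Radj_surj: "\<And>k \<psi>. k \<in> {1..N} \<Longrightarrow> bounded_linear_on (S k) \<psi> \<Longrightarrow>
                     \<exists>\<phi> :: 'v \<Rightarrow>\<^sub>L real. \<forall>x\<in>S k. blinfun_apply \<phi> (Rs k x) = (\<psi> x :: real)"
    and dG0: "\<And>k v. k \<in> {1..N} \<Longrightarrow> Gamma0_on (S k) (\<lambda>x. d k x v)"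
    and GkG0: "\<And>k v. k \<in> {1..N} \<Longrightarrow> Gamma0_on (S k) (\<lambda>x. Gk k x v)"
    and tau0: "0 < \<tau>0" "\<tau>0 \<le> 1" and omega0: "0 < \<omega>0"
    and tau: "0 < \<tau>" "\<tau> \<le> \<tau>0" and omega: "\<omega> \<ge> \<omega>0"
    and u0: "G (u 0) < \<infinity>"
    and wmem: "\<And>n k. k \<in> {1..N} \<Longrightarrow> w (Suc n) k \<in> S k"
    and wmin: "\<And>n k z. k \<in> {1..N} \<Longrightarrow> z \<in> S k \<Longrightarrow>
        ereal (F (u n)) + ereal (blinfun_apply (F' (u n)) (Rs k (w (Suc n) k)))
          + ereal \<omega> * d k (w (Suc n) k) (u n) + Gk k (w (Suc n) k) (u n)
        \<le> ereal (F (u n)) + ereal (blinfun_apply (F' (u n)) (Rs k z))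
          + ereal \<omega> * d k z (u n) + Gk k z (u n)"
    and uSuc: "\<And>n. u (Suc n) = u n + \<tau> *\<^sub>R (\<Sum>k=1..N. Rs k (w (Suc n) k))"
  shows "\<forall>n. \<forall>x.
     ereal (F (u n) + blinfun_apply (F' (u n)) (u (Suc n) - u n)) + M_fun N S Rs d Gk G \<tau> \<omega> (u (Suc n)) (u n)
     \<le> ereal (F (u n) + blinfun_apply (F' (u n)) (x - u n)) + M_fun N S Rs d Gk G \<tau> \<omega> x (u n)"
proof (intro allI)
  fix n x
  have local_min: "ereal (F' (u n) (Rs k (w (Suc n) k))) + ereal \<omega> * d k (w (Suc n) k) (u n)
        + Gk k (w (Suc n) k) (u n)
      \<le> ereal (F' (u n) (Rs k z)) + ereal \<omega> * d k z (u n) + Gk k z (u n)"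
    if "k \<in> {1..N}" "z \<in> S k" for k z
    using wmin[OF that, of n] by (simp only: add.assoc ereal_add_le_add_iff) simp
  show "ereal (F (u n) + F' (u n) (u (Suc n) - u n)) + M_fun N S Rs d Gk G \<tau> \<omega> (u (Suc n)) (u n)
     \<le> ereal (F (u n) + F' (u n) (x - u n)) + M_fun N S Rs d Gk G \<tau> \<omega> x (u n)"
    using wmem uSuc[of n] tau(1) local_min
    by (intro M_fun_linearised_minimal) (auto intro: bounded_linear.linear blinfun.bounded_linear_right)
qed

end
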